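(* Fix $\varepsilon\in(0,\frac12)$ and $\delta\in(0,\frac12)$, and let $m\ge1$. There exist absolute constants $c_1,c_2>0$ and an integer $p_0=p_0(\varepsilon,\delta)$ such that for all $p\ge p_0$ the following hold. For every $n\le (p-1)(\log\frac1\varepsilon-1)$ and every (possibly randomized) label-permutation-equivariant learner $\mathcal{A}$, with $\widehat f=\mathcal{A}(S)$ for $S=\{(X_i,f(X_i))\}_{i=1}^n$, $X_i$ i.i.d. $\sim\mathcal{D}_X$, \[ \mathbb{P}\big[L(\widehat f)\le\varepsilon\big]\ \le\ \exp\!\Big(-\frac{(e-1)^2}{2\log(1/\varepsilon)}\varepsilon^2p\Big)+\exp(-c_1\varepsilon p)+\exp\!\Big(-\frac{c_2\varepsilon^2p}{\log(1/\varepsilon)}\Big), \] and this right-hand side is at most $\delta$. Consequently, every label-permutation-equivariant learner that, with probability at least $1-\delta$ over $S$ and its internal randomness, achieves $L(\widehat f)\le\varepsilon$ must use $n\ge (p-1)(\log\frac1\varepsilon-1)=\Omega(p)$ samples.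
   Context: Let $[p]=\{0,\dots,p-1\}$, $e_r$ the standard basis of $\mathbb{R}^p$, $\mathcal{X}_m=\{x\in\{0,\dots,m\}^p:\|x\|_1=m\}$, and $\mathcal{D}_X$ the law of $X=\sum_{i=1}^m e_{s_i}$ with $s_1,\dots,s_m$ i.i.d. uniform on $[p]$. The ground-truth rule is $f(x)=(\sum_{k\in[p]}k\,x_k)\bmod p$. A (possibly randomized) learning algorithm $\mathcal{A}$ maps a sample $\{(x^{(i)},y^{(i)})\}_{i=1}^n\in(\mathcal{X}_m\times[p])^n$ to a (distribution over) hypothesis $\mathcal{X}_m\to[p]$. $\mathcal{A}$ is label-permutation equivariant if for every sample and every permutation $\sigma$ of $[p]$, $\mathcal{A}(\{(x^{(i)},\sigma(y^{(i)}))\})=\sigma\circ\mathcal{A}(\{(x^{(i)},y^{(i)})\})$ (equality in distribution of the output functions for randomized $\mathcal{A}$). The risk is $L(\widehat f)=\mathbb{P}_{X\sim\mathcal{D}_X}[\widehat f(X)\ne f(X)]$ with $X$ independent of the sample; the outer probability is over the sample and the internal randomness of $\mathcal{A}$. $\log$ is the natural logarithm. *)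

theory Defs
  imports "HOL-Probability.Probability" "HOL-Combinatorics.Permutations"
begin

fun iid_list :: "nat \<Rightarrow> 'a pmf \<Rightarrow> 'a list pmf" where
  "iid_list 0 d = return_pmf []"
| "iid_list (Suc n) d = bind_pmf d (\<lambda>x. map_pmf (\<lambda>xs. x # xs) (iid_list n d))"

text \<open>Vectors in R^p with coordinates indexed by [p] = {0..<p} are represented as
  nat \<Rightarrow> nat functions that vanish outside [p].\<close>
definition Xm :: "nat \<Rightarrow> nat \<Rightarrow> (nat \<Rightarrow> nat) set" where
  "Xm p m = {x. (\<forall>k. p \<le> k \<longrightarrow> x k = 0) \<and> (\<forall>k<p. x k \<le> m) \<and> (\<Sum>k<p. x k) = m}"

text \<open>D_X: law of X = sum_{i=1}^m e_{s_i}, s_i i.i.d. uniform on [p].\<close>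
definition DX :: "nat \<Rightarrow> nat \<Rightarrow> (nat \<Rightarrow> nat) pmf" where
  "DX p m = map_pmf (\<lambda>ss k. length (filter (\<lambda>s. s = k) ss)) (iid_list m (pmf_of_set {..<p}))"

definition target :: "nat \<Rightarrow> (nat \<Rightarrow> nat) \<Rightarrow> nat" where
  "target p x = (\<Sum>k<p. k * x k) mod p"

definition risk :: "nat \<Rightarrow> nat \<Rightarrow> ((nat \<Rightarrow> nat) \<Rightarrow> nat) \<Rightarrow> real" where
  "risk p m h = measure_pmf.prob (DX p m) {x. h x \<noteq> target p x}"

type_synonym learner = "((nat \<Rightarrow> nat) \<times> nat) list \<Rightarrow> ((nat \<Rightarrow> nat) \<Rightarrow> nat) pmf"

definition samples :: "nat \<Rightarrow> nat \<Rightarrow> nat \<Rightarrow> ((nat \<Rightarrow> nat) \<times> nat) list set" where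
  "samples p m n = {S. length S = n \<and> (\<forall>(x,y)\<in>set S. x \<in> Xm p m \<and> y < p)}"

text \<open>A (randomized) learner on samples of size n: outputs hypotheses X_m \<rightarrow> [p].
  Hypotheses are only compared on X_m (values outside X_m are irrelevant).\<close>
definition valid_learner :: "nat \<Rightarrow> nat \<Rightarrow> nat \<Rightarrow> learner \<Rightarrow> bool" where
  "valid_learner p m n A \<longleftrightarrow>
     (\<forall>S\<in>samples p m n. \<forall>h\<in>set_pmf (A S). \<forall>x\<in>Xm p m. h x < p)"

definition label_perm_equivariant :: "nat \<Rightarrow> nat \<Rightarrow> nat \<Rightarrow> learner \<Rightarrow> bool" where
  "label_perm_equivariant p m n A \<longleftrightarrow>
     (\<forall>S\<in>samples p m n. \<forall>\<sigma>. \<sigma> permutes {..<p} \<longrightarrow>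
        map_pmf (\<lambda>h. restrict h (Xm p m)) (A (map (\<lambda>(x,y). (x, \<sigma> y)) S))
        = map_pmf (\<lambda>h. restrict (\<sigma> \<circ> h) (Xm p m)) (A S))"

definition sample_dist :: "nat \<Rightarrow> nat \<Rightarrow> nat \<Rightarrow> ((nat \<Rightarrow> nat) \<times> nat) list pmf" where
  "sample_dist p m n = map_pmf (map (\<lambda>x. (x, target p x))) (iid_list n (DX p m))"

definition output_dist :: "nat \<Rightarrow> nat \<Rightarrow> nat \<Rightarrow> learner \<Rightarrow> ((nat \<Rightarrow> nat) \<Rightarrow> nat) pmf" where
  "output_dist p m n A = bind_pmf (sample_dist p m n) A"

end

theory Submission
  imports Defs "HOL-Number_Theory.Cong" "HOL-Real_Asymp.Real_Asymp"
begin

text \<open>Since \<open>m \<ge> 1\<close>, the labels \<open>f(X\<^sub>i)\<close> are i.i.d. uniform on \<open>[p]\<close>. A coupon collector estimate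
  shows that after \<open>n \<le> (p - 1)(log (1/\<epsilon>) - 1)\<close> samples at least \<open>2\<epsilon>p\<close> labels are still unseen,
  except with probability \<open>exp (-\<epsilon>p/400)\<close>. Relabelling the unseen labels \<open>U\<close> fixes the sample, so
  by equivariance the learner does no better than \<open>\<sigma>\<^sup>-\<^sup>1 \<circ> h\<close> for a uniformly random permutation
  \<open>\<sigma>\<close> of \<open>U\<close>. Such a hypothesis is correct on a point with label \<open>a \<in> U\<close> only if \<open>h\<close> outputs \<open>\<sigma> a\<close>,
  and a permanent-type estimate bounds the fraction of permutations achieving risk \<open>\<le> \<epsilon>\<close> by
  \<open>poly(|U|) exp (\<epsilon>p - |U|)\<close>.\<close>

lemma prob_le_of_random_invariance:
  fixes M :: "'a pmf" and R :: "'b pmf"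
  assumes invariant: "\<And>\<sigma>. \<sigma> \<in> set_pmf R \<Longrightarrow> measure_pmf.prob M {x. f \<sigma> x \<in> E} = measure_pmf.prob M E"
    and bound: "\<And>x. x \<in> set_pmf M \<Longrightarrow> measure_pmf.prob R {\<sigma>. f \<sigma> x \<in> E} \<le> C"
  shows "measure_pmf.prob M E \<le> C"
proof -
  obtain x0 where "x0 \<in> set_pmf M" using set_pmf_not_empty[of M] by blast
  then have "0 \<le> C" using bound[of x0] measure_nonneg order_trans by blast
  have "emeasure M E = (\<integral>\<^sup>+\<sigma>. emeasure M E \<partial>R)"
    by (simp add: measure_pmf.emeasure_space_1)
  also have "\<dots> = (\<integral>\<^sup>+\<sigma>. emeasure M {x. f \<sigma> x \<in> E} \<partial>R)"
    using invariant by (intro nn_integral_cong_AE AE_pmfI) (simp add: measure_pmf.emeasure_eq_measure)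
  also have "\<dots> = emeasure (bind_pmf R (\<lambda>\<sigma>. map_pmf (f \<sigma>) M)) E"
    by (simp add: vimage_def)
  also have "\<dots> = emeasure (bind_pmf M (\<lambda>x. map_pmf (\<lambda>\<sigma>. f \<sigma> x) R)) E"
    unfolding map_pmf_def by (subst bind_commute_pmf) (rule refl)
  also have "\<dots> = (\<integral>\<^sup>+x. emeasure R {\<sigma>. f \<sigma> x \<in> E} \<partial>M)"
    by (simp add: vimage_def)
  also have "\<dots> \<le> (\<integral>\<^sup>+x. C \<partial>M)"
    using bound by (intro nn_integral_mono_AE AE_pmfI) (simp add: measure_pmf.emeasure_eq_measure ennreal_leI)
  finally show ?thesis
    using \<open>0 \<le> C\<close> by (simp add: measure_pmf.emeasure_eq_measure measure_pmf.emeasure_space_1)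
qed

lemma prob_bind_pmf_le:
  assumes "K \<ge> 0" "\<And>x. x \<in> set_pmf M \<Longrightarrow> x \<notin> B \<Longrightarrow> measure_pmf.prob (f x) E \<le> K"
  shows "measure_pmf.prob (bind_pmf M f) E \<le> measure_pmf.prob M B + K"
proof -
  have "emeasure (bind_pmf M f) E = (\<integral>\<^sup>+x. emeasure (f x) E \<partial>M)"
    by simp
  also have "\<dots> \<le> (\<integral>\<^sup>+x. indicator B x + ennreal K \<partial>M)"
  proof (intro nn_integral_mono_AE AE_pmfI)
    fix x assume "x \<in> set_pmf M"
    then show "emeasure (f x) E \<le> indicator B x + ennreal K"
      using assms(2)[of x] measure_pmf.emeasure_le_1[of "f x" E]
      by (cases "x \<in> B") (auto simp: measure_pmf.emeasure_eq_measure ennreal_leI intro: add_increasing2)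
  qed
  also have "\<dots> = emeasure M B + K"
    by (subst nn_integral_add) (auto simp: measure_pmf.emeasure_space_1)
  finally show ?thesis
    using assms(1) by (simp add: measure_pmf.emeasure_eq_measure flip: ennreal_plus)
qed

section \<open>The sample distribution\<close>

lemma map_pmf_map_iid_list: "map_pmf (map g) (iid_list n d) = iid_list n (map_pmf g d)"
proof (induction n)
  case (Suc n)
  have "map_pmf (map g) (iid_list (Suc n) d) =
      bind_pmf d (\<lambda>x. map_pmf (\<lambda>xs. g x # xs) (map_pmf (map g) (iid_list n d)))"
    by (simp add: map_bind_pmf pmf.map_comp o_def)
  then show ?case by (simp add: Suc bind_map_pmf)
qed simp

lemma set_pmf_iid_list:
  assumes "xs \<in> set_pmf (iid_list n d)"
  shows "length xs = n" and "set xs \<subseteq> set_pmf d"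
  using assms by (induction n arbitrary: xs) (auto, blast)

lemma bij_betw_add_mod: "bij_betw (\<lambda>r. (x + r) mod p) {..<p} {..<(p::nat)}"
proof -
  have "inj_on (\<lambda>r. (x + r) mod p) {..<p}"
    by (rule inj_onI) (metis cong_add_lcancel_nat cong_def cong_less_modulus_unique_nat lessThan_iff)
  moreover have "(\<lambda>r. (x + r) mod p) ` {..<p} \<subseteq> {..<p}" by auto
  ultimately show ?thesis
    by (simp add: bij_betw_def endo_inj_surj)
qed

lemma map_pmf_sum_list_mod_iid_uniform:
  assumes "p > 0"
  shows "map_pmf (\<lambda>ss. sum_list ss mod p) (iid_list (Suc k) (pmf_of_set {..<p})) = pmf_of_set {..<(p::nat)}"
proof (induction k)
  case 0
  have "map_pmf (\<lambda>x. x mod p) (pmf_of_set {..<p}) = map_pmf id (pmf_of_set {..<p})"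
    using assms by (intro map_pmf_cong) (auto simp: lessThan_empty_iff)
  then show ?case by (simp add: map_bind_pmf map_pmf_def[symmetric] pmf.map_comp o_def)
next
  case (Suc k)
  have "map_pmf (\<lambda>ss. sum_list ss mod p) (iid_list (Suc (Suc k)) (pmf_of_set {..<p})) =
    bind_pmf (pmf_of_set {..<p}) (\<lambda>x. map_pmf (\<lambda>r. (x + r) mod p)
       (map_pmf (\<lambda>ss. sum_list ss mod p) (iid_list (Suc k) (pmf_of_set {..<p}))))"
    by (simp only: iid_list.simps(2) map_bind_pmf pmf.map_comp o_def sum_list.Cons mod_add_right_eq)
  also have "\<dots> = bind_pmf (pmf_of_set {..<p}) (\<lambda>x. pmf_of_set {..<p})"
    using assms by (simp only: Suc map_pmf_of_set_bij_betw[OF bij_betw_add_mod] lessThan_empty_iff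
        finite_lessThan)
  finally show ?case by simp
qed

lemma set_pmf_DX: "p > 0 \<Longrightarrow> set_pmf (DX p m) \<subseteq> Xm p m"
proof
  fix x assume "p > 0" "x \<in> set_pmf (DX p m)"
  then obtain ss where ss: "ss \<in> set_pmf (iid_list m (pmf_of_set {..<p}))"
    and x: "x = (\<lambda>k. count_list ss k)"
    by (auto simp: DX_def count_list_eq_length_filter eq_commute[of _ "_ :: nat"])
  with \<open>p > 0\<close> have "length ss = m" "set ss \<subseteq> {..<p}"
    using set_pmf_iid_list[OF ss] by (auto simp: lessThan_empty_iff)
  moreover have "(\<Sum>k<p. count_list ss k) = length ss"
    using sum_list_map_eq_sum_count2[of ss "{..<p}" "\<lambda>_. 1::nat"] \<open>set ss \<subseteq> {..<p}\<close>
    by (simp add: sum_list_triv)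
  ultimately show "x \<in> Xm p m"
    by (auto simp: Xm_def x count_list_0_iff count_le_length)
qed

lemma target_DX_uniform:
  assumes "p > 0" "m \<ge> 1"
  shows "map_pmf (target p) (DX p m) = pmf_of_set {..<p}"
proof -
  obtain k where m: "m = Suc k" using assms(2) by (cases m) auto
  have "map_pmf (target p) (DX p m) = map_pmf (\<lambda>ss. sum_list ss mod p) (iid_list m (pmf_of_set {..<p}))"
    unfolding DX_def pmf.map_comp
  proof (rule map_pmf_cong[OF refl])
    fix ss assume "ss \<in> set_pmf (iid_list m (pmf_of_set {..<p}))"
    then have "set ss \<subseteq> {..<p}" using set_pmf_iid_list assms(1) by (fastforce simp: lessThan_empty_iff)
    then show "(target p \<circ> (\<lambda>ss k. length (filter (\<lambda>s. s = k) ss))) ss = sum_list ss mod p"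
      using sum_list_map_eq_sum_count2[of ss "{..<p}" id]
      by (simp add: target_def count_list_eq_length_filter eq_commute[of _ "_ :: nat"] mult.commute)
  qed
  then show ?thesis using map_pmf_sum_list_mod_iid_uniform[OF assms(1)] m by simp
qed

lemma labels_sample_dist:
  assumes "p > 0" "m \<ge> 1"
  shows "map_pmf (map snd) (sample_dist p m n) = iid_list n (pmf_of_set {..<p})"
proof -
  have "map_pmf (map snd) (sample_dist p m n) = map_pmf (map (target p)) (iid_list n (DX p m))"
    by (simp add: sample_dist_def pmf.map_comp o_def)
  then show ?thesis
    by (simp add: map_pmf_map_iid_list target_DX_uniform[OF assms])
qed

lemma set_pmf_sample_dist:
  assumes "p > 0"
  shows "set_pmf (sample_dist p m n) \<subseteq> samples p m n"
proof
  fix S assume "S \<in> set_pmf (sample_dist p m n)"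
  then obtain xs where xs: "xs \<in> set_pmf (iid_list n (DX p m))" and S: "S = map (\<lambda>x. (x, target p x)) xs"
    by (auto simp: sample_dist_def)
  show "S \<in> samples p m n"
    using set_pmf_iid_list[OF xs] set_pmf_DX[OF assms] assms by (auto simp: S samples_def target_def)
qed

section \<open>Coupon collecting\<close>

text \<open>With \<open>d\<close> values covered, a fresh value (probability \<open>(p - d)/p\<close>) multiplies the potential by
  \<open>1 + g p/(p - d)\<close>, so in expectation it grows by exactly the factor \<open>1 + g\<close> per draw.\<close>

definition coverage_potential :: "real \<Rightarrow> nat \<Rightarrow> nat \<Rightarrow> real" where
  "coverage_potential g p d = (\<Prod>j<d. 1 + g * real p / real (p - j))"

lemma coverage_potential_Suc:
  "coverage_potential g p (Suc d) = coverage_potential g p d * (1 + g * real p / real (p - d))"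
  by (simp add: coverage_potential_def)

lemma coverage_potential_ge_one: "g \<ge> 0 \<Longrightarrow> coverage_potential g p d \<ge> 1"
  unfolding coverage_potential_def by (rule prod_ge_1) auto

lemma coverage_potential_pos: "g \<ge> 0 \<Longrightarrow> coverage_potential g p d > 0"
  using coverage_potential_ge_one[of g p d] by linarith

lemma coverage_potential_mono:
  assumes "g \<ge> 0" "d \<le> d'"
  shows "coverage_potential g p d \<le> coverage_potential g p d'"
proof -
  have "coverage_potential g p d' =
      coverage_potential g p d * (\<Prod>j\<in>{d..<d'}. 1 + g * real p / real (p - j))"
    unfolding coverage_potential_def using assms(2)
    by (metis atLeast0LessThan le0 prod.atLeastLessThan_concat)
  moreover have "(\<Prod>j\<in>{d..<d'}. 1 + g * real p / real (p - j)) \<ge> 1"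
    using assms by (intro prod_ge_1) auto
  ultimately show ?thesis
    using coverage_potential_ge_one[OF assms(1), of p d] by (simp add: mult_le_cancel_left1)
qed

lemma sum_coverage_potential_insert_le:
  assumes "g \<ge> 0" "T \<subseteq> {..<p}"
  shows "(\<Sum>x<p. coverage_potential g p (card (insert x T))) \<le> real p * (1 + g) * coverage_potential g p (card T)"
proof -
  define t where "t = card T"
  have "finite T" using assms(2) finite_subset by blast
  have "t \<le> p" using card_mono[OF _ assms(2)] by (simp add: t_def)
  have "(\<Sum>x<p. coverage_potential g p (card (insert x T))) =
      (\<Sum>x\<in>T. coverage_potential g p t) + (\<Sum>x\<in>{..<p} - T. coverage_potential g p (Suc t))"
    using assms(2) \<open>finite T\<close>
    by (simp add: sum.subset_diff[of T] t_def insert_absorb add.commute)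
  also have "\<dots> = real t * coverage_potential g p t + real (p - t) * coverage_potential g p (Suc t)"
    using assms(2) \<open>finite T\<close> by (simp add: card_Diff_subset t_def)
  also have "\<dots> \<le> real p * (1 + g) * coverage_potential g p t"
  proof (cases "t < p")
    case True
    then have "real (p - t) * coverage_potential g p (Suc t) =
        coverage_potential g p t * (real (p - t) + g * real p)"
      by (simp add: coverage_potential_Suc field_simps)
    with True show ?thesis by (simp add: algebra_simps of_nat_diff)
  next
    case False
    with \<open>t \<le> p\<close> show ?thesis
      using assms(1) coverage_potential_ge_one[OF assms(1), of p t] by (simp add: algebra_simps)
  qed
  finally show ?thesis by (simp add: t_def)
qed

lemma nn_integral_coverage_potential_le:
  assumes "p > 0" "g \<ge> 0" "T \<subseteq> {..<p}"
  shows "(\<integral>\<^sup>+ys. coverage_potential g p (card (T \<union> (set ys \<inter> {..<p}))) \<partial>iid_list n (pmf_of_set {..<p}))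
     \<le> (1 + g) ^ n * coverage_potential g p (card T)"
  using assms(3)
proof (induction n arbitrary: T)
  case (Suc n)
  let ?U = "pmf_of_set {..<p}"
  have "(\<integral>\<^sup>+ys. coverage_potential g p (card (T \<union> (set ys \<inter> {..<p}))) \<partial>iid_list (Suc n) ?U)
      = (\<integral>\<^sup>+x. (\<integral>\<^sup>+ys. coverage_potential g p (card (T \<union> (set (x # ys) \<inter> {..<p}))) \<partial>iid_list n ?U) \<partial>?U)"
    by simp
  also have "\<dots> = (\<integral>\<^sup>+x. (\<integral>\<^sup>+ys. coverage_potential g p (card (insert x T \<union> (set ys \<inter> {..<p}))) \<partial>iid_list n ?U) \<partial>?U)"
  proof (rule nn_integral_cong_AE, rule AE_pmfI)
    fix x assume "x \<in> set_pmf ?U"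
    with assms(1) have "\<And>ys. T \<union> (set (x # ys) \<inter> {..<p}) = insert x T \<union> (set ys \<inter> {..<p})"
      by (auto simp: lessThan_empty_iff)
    then show "(\<integral>\<^sup>+ys. coverage_potential g p (card (T \<union> (set (x # ys) \<inter> {..<p}))) \<partial>iid_list n ?U) =
        (\<integral>\<^sup>+ys. coverage_potential g p (card (insert x T \<union> (set ys \<inter> {..<p}))) \<partial>iid_list n ?U)"
      by (simp only:)
  qed
  also have "\<dots> \<le> (\<integral>\<^sup>+x. (1 + g) ^ n * coverage_potential g p (card (insert x T)) \<partial>?U)"
  proof (intro nn_integral_mono_AE AE_pmfI)
    fix x assume "x \<in> set_pmf ?U"
    with assms(1) Suc.prems have "insert x T \<subseteq> {..<p}" by (auto simp: lessThan_empty_iff)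
    then show "(\<integral>\<^sup>+ys. coverage_potential g p (card (insert x T \<union> (set ys \<inter> {..<p}))) \<partial>iid_list n ?U)
        \<le> (1 + g) ^ n * coverage_potential g p (card (insert x T))"
      by (rule Suc.IH)
  qed
  also have "\<dots> = (\<integral>x. (1 + g) ^ n * coverage_potential g p (card (insert x T)) \<partial>?U)"
    using assms(1,2) coverage_potential_pos[OF assms(2)]
    by (intro nn_integral_eq_integral integrable_measure_pmf_finite AE_I2)
      (auto simp: lessThan_empty_iff less_imp_le)
  also have "\<dots> = (1 + g) ^ n * (\<Sum>x<p. coverage_potential g p (card (insert x T))) / real p"
    using assms(1) by (simp add: integral_pmf_of_set lessThan_empty_iff sum_distrib_left)
  also have "\<dots> \<le> (1 + g) ^ n * (real p * (1 + g) * coverage_potential g p (card T)) / real p"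
    using sum_coverage_potential_insert_le[OF assms(2) Suc.prems] assms(2)
    by (intro ennreal_leI divide_right_mono mult_left_mono) auto
  also have "\<dots> = (1 + g) ^ Suc n * coverage_potential g p (card T)"
    using assms(1) by (simp add: ac_simps)
  finally show ?case .
qed (simp add: coverage_potential_def)

lemma prob_many_distinct_le:
  assumes "p > 0" "g \<ge> 0"
  shows "measure_pmf.prob (iid_list n (pmf_of_set {..<p})) {ys. r \<le> card (set ys \<inter> {..<p})}
     \<le> (1 + g) ^ n / coverage_potential g p r"
proof -
  let ?\<Phi> = "\<lambda>ys. coverage_potential g p (card (set ys \<inter> {..<p}))"
  have "indicator {ys. r \<le> card (set ys \<inter> {..<p})} ys \<le> ennreal (1 / coverage_potential g p r) * ?\<Phi> ys"
    for ys
  proof (cases "r \<le> card (set ys \<inter> {..<p})")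
    case True
    then have "indicator {ys. r \<le> card (set ys \<inter> {..<p})} ys = ennreal 1"
      by simp
    also have "\<dots> \<le> ennreal (1 / coverage_potential g p r * ?\<Phi> ys)"
      using coverage_potential_pos[OF assms(2)] coverage_potential_mono[OF assms(2) True]
      by (intro ennreal_leI) simp
    also have "\<dots> = ennreal (1 / coverage_potential g p r) * ?\<Phi> ys"
      using coverage_potential_pos[OF assms(2), of p r] by (intro ennreal_mult') simp
    finally show ?thesis .
  qed simp
  then have "emeasure (iid_list n (pmf_of_set {..<p})) {ys. r \<le> card (set ys \<inter> {..<p})}
      \<le> (\<integral>\<^sup>+ys. ennreal (1 / coverage_potential g p r) * ?\<Phi> ys \<partial>iid_list n (pmf_of_set {..<p}))"
    by (simp add: nn_integral_mono flip: nn_integral_indicator)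
  also have "\<dots> \<le> ennreal (1 / coverage_potential g p r) * ((1 + g) ^ n * coverage_potential g p 0)"
    using nn_integral_coverage_potential_le[OF assms, of "{}"]
    by (simp add: nn_integral_cmult mult_left_mono)
  also have "\<dots> = ennreal (1 / coverage_potential g p r * ((1 + g) ^ n * coverage_potential g p 0))"
    using coverage_potential_pos[OF assms(2), of p r] by (intro ennreal_mult'[symmetric]) simp
  also have "1 / coverage_potential g p r * ((1 + g) ^ n * coverage_potential g p 0) =
      (1 + g) ^ n / coverage_potential g p r"
    by (simp add: coverage_potential_def)
  finally show ?thesis
    using coverage_potential_pos[OF assms(2), of p r] assms(2)
    by (simp add: measure_pmf.emeasure_eq_measure ennreal_le_iff)
qed

lemma prob_few_unseen_labels_le:
  assumes "p > 0" "m \<ge> 1" "g \<ge> 0" "s \<le> p"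
  shows "measure_pmf.prob (sample_dist p m n) {S. card ({..<p} - snd ` set S) \<le> s}
    \<le> (1 + g) ^ n / coverage_potential g p (p - s)"
proof -
  have "card ({..<p} - Y) \<le> s \<longleftrightarrow> p - s \<le> card (Y \<inter> {..<p})" for Y :: "nat set"
  proof -
    have "card ({..<p} - Y) = p - card (Y \<inter> {..<p})"
      by (simp add: card_Diff_subset_Int Int_commute)
    moreover have "card (Y \<inter> {..<p}) \<le> p"
      by (metis card_lessThan card_mono finite_lessThan inf_le2)
    ultimately show ?thesis using assms(4) by linarith
  qed
  then have "measure_pmf.prob (sample_dist p m n) {S. card ({..<p} - snd ` set S) \<le> s}
      = measure_pmf.prob (iid_list n (pmf_of_set {..<p})) {ys. p - s \<le> card (set ys \<inter> {..<p})}"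
    by (simp add: labels_sample_dist[OF assms(1,2), symmetric] vimage_def)
  also have "\<dots> \<le> (1 + g) ^ n / coverage_potential g p (p - s)"
    by (rule prob_many_distinct_le[OF assms(1,3)])
  finally show ?thesis .
qed

lemma ln_div_le_sum_inverse:
  fixes s p :: nat
  assumes "s \<le> p"
  shows "ln ((real p + 1) / (real s + 1)) \<le> (\<Sum>i\<in>{s+1..p}. 1 / real i)"
  using assms
proof (induction p rule: dec_induct)
  case base then show ?case by simp
next
  case (step q)
  have e: "{s+1..Suc q} = insert (Suc q) {s+1..q}" using step by auto
  have "ln ((real (Suc q) + 1) / (real s + 1)) = ln ((real q + 1) / (real s + 1)) + ln ((real q + 2) / (real q + 1))"
    by (simp add: ln_div[symmetric] ln_mult[symmetric] field_simps) (simp add: ln_div)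
  also have "ln ((real q + 2) / (real q + 1)) \<le> 1 / real (Suc q)"
  proof -
    have "ln ((real q + 2) / (real q + 1)) = ln (1 + 1 / (real q + 1))" by (simp add: field_simps)
    also have "\<dots> \<le> 1 / (real q + 1)" by (rule ln_add_one_self_le_self) simp
    finally show ?thesis by (simp add: add.commute)
  qed
  ultimately show ?case using step e by simp
qed

lemma sum_inverse_square_le:
  fixes s p :: nat
  assumes "1 \<le> s" "s \<le> p"
  shows "(\<Sum>i\<in>{s+1..p}. 1 / real i ^ 2) \<le> 1 / real s - 1 / real p"
  using assms(2)
proof (induction p rule: dec_induct)
  case base then show ?case by simp
next
  case (step q)
  have e: "{s+1..Suc q} = insert (Suc q) {s+1..q}" using step by auto
  have q: "real q \<ge> 1" using assms step by simp
  have "1 / real (Suc q) ^ 2 \<le> 1 / real q - 1 / real (Suc q)"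
  proof -
    have "1 / real (Suc q) ^ 2 = 1 / ((real q + 1) * (real q + 1))" by (simp add: power2_eq_square add.commute)
    also have "\<dots> \<le> 1 / (real q * (real q + 1))"
      using q by (intro divide_left_mono mult_right_mono mult_pos_pos) auto
    also have "\<dots> = 1 / real q - 1 / real (Suc q)" using q by (simp add: field_simps)
    finally show ?thesis .
  qed
  then show ?case using step e by simp
qed

lemma coverage_potential_eq_prod:
  assumes "s \<le> p"
  shows "coverage_potential g p (p - s) = (\<Prod>i\<in>{s+1..p}. 1 + g * real p / real i)"
proof -
  have img: "(\<lambda>j. p - j) ` {..<p - s} = {s+1..p}"
  proof
    show "(\<lambda>j. p - j) ` {..<p - s} \<subseteq> {s + 1..p}" by auto
    show "{s + 1..p} \<subseteq> (\<lambda>j. p - j) ` {..<p - s}"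
    proof
      fix i assume "i \<in> {s+1..p}"
      then have "i = p - (p - i)" "p - i \<in> {..<p - s}" by auto
      then show "i \<in> (\<lambda>j. p - j) ` {..<p - s}" by blast
    qed
  qed
  have inj: "inj_on (\<lambda>j. p - j) {..<p - s}" by (rule inj_onI) auto
  show ?thesis unfolding coverage_potential_def img[symmetric] prod.reindex[OF inj] by (simp add: o_def)
qed

lemma coverage_potential_ge_exp:
  assumes g: "g \<ge> 0" and s: "1 \<le> s" "s \<le> p" and gp: "g * real p \<le> real s + 1"
  shows "coverage_potential g p (p - s) \<ge> exp (g * real p * ln ((real p + 1) / (real s + 1)) - g^2 * real p ^ 2 / real s)"
proof -
  have "exp (g * real p * ln ((real p + 1) / (real s + 1)) - g^2 * real p ^ 2 / real s)
      \<le> exp (g * real p * (\<Sum>i\<in>{s+1..p}. 1 / real i) - g^2 * real p ^ 2 * (\<Sum>i\<in>{s+1..p}. 1 / real i ^ 2))"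
  proof -
    have "g * real p * ln ((real p + 1) / (real s + 1)) \<le> g * real p * (\<Sum>i\<in>{s+1..p}. 1 / real i)"
      using ln_div_le_sum_inverse[OF s(2)] g by (intro mult_left_mono) auto
    moreover have "g^2 * real p ^ 2 * (\<Sum>i\<in>{s+1..p}. 1 / real i ^ 2) \<le> g^2 * real p ^ 2 / real s"
    proof -
      have "g^2 * real p ^ 2 * (\<Sum>i\<in>{s+1..p}. 1 / real i ^ 2) \<le> g^2 * real p ^ 2 * (1 / real s - 1 / real p)"
        using sum_inverse_square_le[OF s] by (intro mult_left_mono) auto
      also have "\<dots> \<le> g^2 * real p ^ 2 * (1 / real s)"
        by (intro mult_left_mono) auto
      finally show ?thesis by simp
    qed
    ultimately show ?thesis by simp
  qed
  also have "\<dots> = exp (\<Sum>i\<in>{s+1..p}. (g * real p / real i) - (g * real p / real i)^2)"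
    by (simp add: sum_subtractf sum_distrib_left power_divide power_mult_distrib)
  also have "\<dots> = (\<Prod>i\<in>{s+1..p}. exp ((g * real p / real i) - (g * real p / real i)^2))"
    by (rule exp_sum) simp
  also have "\<dots> \<le> (\<Prod>i\<in>{s+1..p}. 1 + g * real p / real i)"
  proof (rule prod_mono)
    fix i assume i: "i \<in> {s+1..p}"
    have x0: "0 \<le> g * real p / real i" using g by simp
    have x1: "g * real p / real i \<le> 1" using i gp by (simp add: field_simps)
    have "exp ((g * real p / real i) - (g * real p / real i)^2) \<le> exp (ln (1 + g * real p / real i))"
      using ln_one_plus_pos_lower_bound[OF x0 x1] by simp
    also have "\<dots> = 1 + g * real p / real i" using x0 by simp
    finally show "0 \<le> exp ((g * real p / real i) - (g * real p / real i)^2) \<and>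
       exp ((g * real p / real i) - (g * real p / real i)^2) \<le> 1 + g * real p / real i" by simp
  qed
  also have "\<dots> = coverage_potential g p (p - s)" using coverage_potential_eq_prod[OF s(2)] by simp
  finally show ?thesis .
qed

lemma ln_two_point_one_le: "ln (2.1::real) \<le> 0.9"
proof -
  have "(1.3::real) ^ 3 \<le> exp (0.3) ^ 3"
    using exp_ge_add_one_self[of "0.3::real"] by (intro power_mono) auto
  also have "\<dots> = exp (0.9)" by (simp add: exp_of_nat_mult[symmetric])
  finally have a: "(1.3::real) ^ 3 \<le> exp (0.9)" .
  have "(2.1::real) \<le> 1.3 ^ 3" by (simp add: power3_eq_cube)
  then have "2.1 \<le> exp (0.9::real)" using a by linarith
  then have "ln 2.1 \<le> ln (exp (0.9::real))" by (intro ln_mono) auto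
  then show ?thesis by simp
qed

lemma coverage_potential_ge_exp_eps:
  fixes \<epsilon> :: real
  assumes "0 < \<epsilon>" "1 \<le> s" "s \<le> p" "\<epsilon> * real p \<le> real s" "real s + 1 \<le> 2.1 * \<epsilon> * real p"
  shows "exp (\<epsilon> * real p / 20 * (ln (1/\<epsilon>) - 0.9) - \<epsilon> * real p / 400)
    \<le> coverage_potential (\<epsilon>/20) p (p - s)"
proof -
  define g where "g = \<epsilon> / 20"
  have "g \<ge> 0" "real p > 0" using assms by (auto simp: g_def)
  have "ln (1/\<epsilon>) - 0.9 \<le> ln (1 / (2.1 * \<epsilon>))"
    using assms(1) ln_two_point_one_le by (simp add: ln_div ln_mult)
  also have "\<dots> \<le> ln ((real p + 1) / (real s + 1))"
  proof (rule ln_mono)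
    have "1 / (2.1 * \<epsilon>) = real p / (2.1 * \<epsilon> * real p)" using \<open>real p > 0\<close> by simp
    also have "\<dots> \<le> (real p + 1) / (real s + 1)"
      using assms(1,5) \<open>real p > 0\<close> by (intro frac_le) auto
    finally show "1 / (2.1 * \<epsilon>) \<le> (real p + 1) / (real s + 1)" .
  qed (use assms(1) in auto)
  finally have "g * real p * (ln (1/\<epsilon>) - 0.9) \<le> g * real p * ln ((real p + 1) / (real s + 1))"
    using \<open>g \<ge> 0\<close> by (intro mult_left_mono) auto
  moreover have "g^2 * real p ^ 2 / real s \<le> g^2 * real p ^ 2 / (\<epsilon> * real p)"
    using assms \<open>real p > 0\<close> by (intro divide_left_mono mult_pos_pos) auto
  moreover have "g^2 * real p ^ 2 / (\<epsilon> * real p) = \<epsilon> * real p / 400"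
    using assms(1) \<open>real p > 0\<close> by (simp add: g_def power2_eq_square)
  ultimately have "exp (g * real p * (ln (1/\<epsilon>) - 0.9) - \<epsilon> * real p / 400)
      \<le> exp (g * real p * ln ((real p + 1) / (real s + 1)) - g^2 * real p ^ 2 / real s)"
    by (subst exp_le_cancel_iff) linarith
  also have "\<dots> \<le> coverage_potential g p (p - s)"
    using assms by (intro coverage_potential_ge_exp \<open>g \<ge> 0\<close>) (auto simp: g_def)
  finally show ?thesis by (simp add: g_def algebra_simps)
qed

text \<open>With \<open>g = \<epsilon>/20\<close> and \<open>L = ln (1/\<epsilon>)\<close> the exponent is
  \<open>g p (L - 1) - g p (L - 0.9) + \<epsilon> p/400 = -\<epsilon> p/400\<close>.\<close>

lemma coverage_bound_le_exp:
  fixes \<epsilon> :: real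
  assumes "0 < \<epsilon>" "real n \<le> real p * (ln (1/\<epsilon>) - 1)"
    and "1 \<le> s" "s \<le> p" "\<epsilon> * real p \<le> real s" "real s + 1 \<le> 2.1 * \<epsilon> * real p"
  shows "(1 + \<epsilon>/20) ^ n / coverage_potential (\<epsilon>/20) p (p - s) \<le> exp (- \<epsilon> * real p / 400)"
proof -
  have "(1 + \<epsilon>/20) ^ n \<le> exp (\<epsilon>/20) ^ n"
    using assms(1) by (intro power_mono) (auto simp: exp_ge_add_one_self add.commute)
  also have "\<dots> = exp (\<epsilon>/20 * real n)" by (simp add: exp_of_nat_mult[symmetric] mult.commute)
  also have "\<dots> \<le> exp (\<epsilon> * real p / 20 * (ln (1/\<epsilon>) - 1))"
    using assms(1,2) by (simp add: mult.assoc mult_left_mono)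
  finally have "(1 + \<epsilon>/20) ^ n / coverage_potential (\<epsilon>/20) p (p - s)
      \<le> exp (\<epsilon> * real p / 20 * (ln (1/\<epsilon>) - 1)) / exp (\<epsilon> * real p / 20 * (ln (1/\<epsilon>) - 0.9) - \<epsilon> * real p / 400)"
    using coverage_potential_ge_exp_eps[OF assms(1,3-6)] by (intro frac_le) auto
  also have "\<dots> = exp (- \<epsilon> * real p / 400)"
    by (simp add: exp_diff[symmetric] field_simps)
  finally show ?thesis .
qed

section \<open>Random permutations\<close>

lemma sum_transpose_le_sum_insert:
  fixes f :: "'a \<Rightarrow> real"
  assumes "finite S" "a \<notin> S" "b \<in> insert a S" "\<And>d. d \<in> insert a S \<Longrightarrow> 0 \<le> f d"
  shows "(\<Sum>c\<in>S. f (Transposition.transpose a b c)) \<le> (\<Sum>d\<in>insert a S. f d)"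
proof -
  have "(\<Sum>c\<in>S. f (Transposition.transpose a b c)) = (\<Sum>d\<in>Transposition.transpose a b ` S. f d)"
    by (simp add: sum.reindex inj_on_subset[OF bij_is_inj[OF Transposition.bij_transpose]])
  also have "\<dots> \<le> (\<Sum>d\<in>insert a S. f d)"
    using assms by (intro sum_mono2) (auto simp: Transposition.transpose_def)
  finally show ?thesis .
qed

text \<open>Expanding over the value \<open>b = \<sigma> a\<close> of a new point \<open>a\<close>, the row sum bound gives a factor
  \<open>(n + 1) + 2 (\<Sum>b. Y a b) \<le> n + 3\<close>, which is exactly the growth of \<open>n! (n + 1) (n + 2) / 2\<close>.\<close>

lemma sum_permutes_prod_le:
  fixes Y :: "'a \<Rightarrow> 'a \<Rightarrow> real"
  assumes "finite S" "\<And>a b. a \<in> S \<Longrightarrow> 0 \<le> Y a b" "\<And>a. a \<in> S \<Longrightarrow> (\<Sum>b\<in>S. Y a b) \<le> 1"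
  shows "(\<Sum>\<sigma> | \<sigma> permutes S. \<Prod>a\<in>S. 1 + 2 * Y a (\<sigma> a))
    \<le> fact (card S) * ((real (card S) + 1) * (real (card S) + 2) / 2)"
  using assms
proof (induction S arbitrary: Y rule: finite_induct)
  case empty
  then show ?case by (simp add: permutes_empty)
next
  case (insert a S)
  define n where "n = card S"
  define K where "K = fact n * ((real n + 1) * (real n + 2) / 2)"
  have inner: "(\<Sum>q | q permutes S. \<Prod>x\<in>S. 1 + 2 * Y x (Transposition.transpose a b (q x))) \<le> K"
    if b: "b \<in> insert a S" for b
    unfolding K_def n_def
  proof (rule insert.IH[of "\<lambda>x c. Y x (Transposition.transpose a b c)"])
    fix x assume "x \<in> S"
    then have "(\<Sum>c\<in>S. Y x (Transposition.transpose a b c)) \<le> (\<Sum>d\<in>insert a S. Y x d)"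
      using insert.hyps insert.prems(1) b by (intro sum_transpose_le_sum_insert) auto
    also have "\<dots> \<le> 1" using insert.prems(2) \<open>x \<in> S\<close> by simp
    finally show "(\<Sum>c\<in>S. Y x (Transposition.transpose a b c)) \<le> 1" .
  qed (use insert.prems(1) in simp)
  have "(\<Sum>\<sigma> | \<sigma> permutes insert a S. \<Prod>x\<in>insert a S. 1 + 2 * Y x (\<sigma> x))
     = (\<Sum>b\<in>insert a S. \<Sum>q | q permutes S. \<Prod>x\<in>insert a S. 1 + 2 * Y x ((Transposition.transpose a b \<circ> q) x))"
    by (rule sum_over_permutations_insert) (use insert.hyps in auto)
  also have "\<dots> = (\<Sum>b\<in>insert a S. (1 + 2 * Y a b) *
      (\<Sum>q | q permutes S. \<Prod>x\<in>S. 1 + 2 * Y x (Transposition.transpose a b (q x))))"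
    using insert.hyps by (auto simp: sum_distrib_left permutes_not_in intro!: sum.cong)
  also have "\<dots> \<le> (\<Sum>b\<in>insert a S. (1 + 2 * Y a b) * K)"
    using inner insert.prems(1) by (intro sum_mono mult_left_mono) auto
  also have "\<dots> = (real (Suc n) + 2 * (\<Sum>b\<in>insert a S. Y a b)) * K"
    by (simp only: sum_distrib_right[symmetric])
      (simp add: n_def sum.distrib insert.hyps flip: sum_distrib_left)
  also have "\<dots> \<le> (real (Suc n) + 2) * K"
    using insert.prems(2)[of a] by (intro mult_right_mono) (auto simp: K_def)
  also have "\<dots> = fact (card (insert a S)) * ((real (card (insert a S)) + 1) * (real (card (insert a S)) + 2) / 2)"
    using insert.hyps by (simp add: n_def K_def algebra_simps)
  finally show ?case .
qed

lemma exp_le_one_plus_double: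
  fixes y :: real
  assumes "0 \<le> y" "y \<le> 1"
  shows "exp y \<le> 1 + 2 * y"
proof -
  have "exp y \<le> 1 + y + y\<^sup>2" by (rule exp_bound[OF assms])
  also have "\<dots> \<le> 1 + 2 * y" using assms by (simp add: power2_eq_square mult_left_le)
  finally show ?thesis .
qed

lemma card_permutes_sum_ge_le:
  fixes Y :: "'a \<Rightarrow> 'a \<Rightarrow> real"
  assumes "finite S" "\<And>a b. a \<in> S \<Longrightarrow> 0 \<le> Y a b" "\<And>a. a \<in> S \<Longrightarrow> (\<Sum>b\<in>S. Y a b) \<le> 1"
  shows "real (card {\<sigma>. \<sigma> permutes S \<and> t \<le> (\<Sum>a\<in>S. Y a (\<sigma> a))})
    \<le> fact (card S) * ((real (card S) + 1) * (real (card S) + 2) / 2) * exp (- t)"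
proof -
  have exp_le: "exp (\<Sum>a\<in>S. Y a (\<sigma> a)) \<le> (\<Prod>a\<in>S. 1 + 2 * Y a (\<sigma> a))" if "\<sigma> permutes S" for \<sigma>
    unfolding exp_sum[OF assms(1)]
  proof (intro prod_mono conjI exp_le_one_plus_double)
    fix a assume "a \<in> S"
    with that have "\<sigma> a \<in> S" by (simp add: permutes_in_image)
    with assms \<open>a \<in> S\<close> show "Y a (\<sigma> a) \<le> 1" by (metis member_le_sum order_trans)
  qed (use assms(2) in auto)
  let ?P = "{\<sigma>. \<sigma> permutes S}"
  have "real (card {\<sigma>. \<sigma> permutes S \<and> t \<le> (\<Sum>a\<in>S. Y a (\<sigma> a))})
      = (\<Sum>\<sigma>\<in>?P. if t \<le> (\<Sum>a\<in>S. Y a (\<sigma> a)) then 1 else 0)"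
    using finite_permutations[OF assms(1)] by (simp add: sum.If_cases Int_def)
  also have "\<dots> \<le> (\<Sum>\<sigma>\<in>?P. exp (- t) * (\<Prod>a\<in>S. 1 + 2 * Y a (\<sigma> a)))"
  proof (rule sum_mono)
    fix \<sigma> assume "\<sigma> \<in> ?P"
    have "0 \<le> (\<Prod>a\<in>S. 1 + 2 * Y a (\<sigma> a))"
      using assms(2) by (intro prod_nonneg) (simp add: add_nonneg_nonneg)
    moreover have "1 \<le> exp (- t) * (\<Prod>a\<in>S. 1 + 2 * Y a (\<sigma> a))" if "t \<le> (\<Sum>a\<in>S. Y a (\<sigma> a))"
    proof -
      have "1 \<le> exp (- t) * exp (\<Sum>a\<in>S. Y a (\<sigma> a))" using that by (simp add: mult_exp_exp)
      also have "\<dots> \<le> exp (- t) * (\<Prod>a\<in>S. 1 + 2 * Y a (\<sigma> a))"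
        using exp_le \<open>\<sigma> \<in> ?P\<close> by simp
      finally show ?thesis .
    qed
    ultimately show "(if t \<le> (\<Sum>a\<in>S. Y a (\<sigma> a)) then 1 else 0) \<le> exp (- t) * (\<Prod>a\<in>S. 1 + 2 * Y a (\<sigma> a))"
      by simp
  qed
  also have "\<dots> \<le> exp (- t) * (fact (card S) * ((real (card S) + 1) * (real (card S) + 2) / 2))"
    unfolding sum_distrib_left[symmetric] by (intro mult_left_mono sum_permutes_prod_le[OF assms]) auto
  finally show ?thesis by (simp add: mult.commute)
qed

section \<open>Equivariant learners\<close>

lemma risk_restrict:
  assumes "p > 0"
  shows "risk p m (restrict h (Xm p m)) = risk p m h"
proof -
  have "{x. restrict h (Xm p m) x \<noteq> target p x} \<inter> set_pmf (DX p m) = {x. h x \<noteq> target p x} \<inter> set_pmf (DX p m)"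
    using set_pmf_DX[OF assms] by auto
  then show ?thesis unfolding risk_def by (metis measure_Int_set_pmf)
qed

lemma prob_target_in:
  assumes "p > 0" "m \<ge> 1" "U \<subseteq> {..<p}"
  shows "measure_pmf.prob (DX p m) {x. target p x \<in> U} = real (card U) / real p"
proof -
  have "measure_pmf.prob (DX p m) {x. target p x \<in> U} = measure_pmf.prob (map_pmf (target p) (DX p m)) U"
    by (simp add: vimage_def)
  then show ?thesis using assms
    by (simp add: target_DX_uniform measure_pmf_of_set lessThan_empty_iff Int_absorb1)
qed

lemma sum_prob_target_hyp_le:
  assumes "p > 0" "m \<ge> 1" "a < p" "finite U"
  shows "(\<Sum>b\<in>U. measure_pmf.prob (DX p m) {x. target p x = a \<and> h x = b}) \<le> 1 / real p"
proof -
  have "(\<Sum>b\<in>U. measure_pmf.prob (DX p m) {x. target p x = a \<and> h x = b})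
      = measure_pmf.prob (DX p m) (\<Union>b\<in>U. {x. target p x = a \<and> h x = b})"
    using assms(4) by (intro measure_pmf.finite_measure_finite_Union[symmetric]) (auto simp: disjoint_family_on_def)
  also have "\<dots> \<le> measure_pmf.prob (DX p m) {x. target p x \<in> {a}}"
    by (intro measure_pmf.finite_measure_mono) auto
  also have "\<dots> = 1 / real p"
    using prob_target_in[OF assms(1,2), of "{a}"] assms(3) by simp
  finally show ?thesis .
qed

text \<open>A hypothesis \<open>\<sigma>\<^sup>-\<^sup>1 \<circ> h\<close> can only be right on a label \<open>a \<in> U\<close> where \<open>h\<close> outputs \<open>\<sigma> a\<close>.\<close>

lemma risk_inv_perm_ge:
  assumes "p > 0" "m \<ge> 1" "\<sigma> permutes U" "U \<subseteq> {..<p}"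
  shows "real (card U) / real p - (\<Sum>a\<in>U. measure_pmf.prob (DX p m) {x. target p x = a \<and> h x = \<sigma> a})
    \<le> risk p m (inv \<sigma> \<circ> h)"
proof -
  have "finite U" using assms(4) finite_subset by blast
  have "{x. target p x \<in> U} \<subseteq> {x. (inv \<sigma> \<circ> h) x \<noteq> target p x} \<union> (\<Union>a\<in>U. {x. target p x = a \<and> h x = \<sigma> a})"
  proof
    fix x assume x: "x \<in> {x. target p x \<in> U}"
    show "x \<in> {x. (inv \<sigma> \<circ> h) x \<noteq> target p x} \<union> (\<Union>a\<in>U. {x. target p x = a \<and> h x = \<sigma> a})"
    proof (cases "inv \<sigma> (h x) = target p x")
      case True
      then have "h x = \<sigma> (target p x)" using permutes_inverses(1)[OF assms(3)] by metis
      with x show ?thesis by auto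
    qed simp
  qed
  then have "measure_pmf.prob (DX p m) {x. target p x \<in> U}
      \<le> measure_pmf.prob (DX p m) ({x. (inv \<sigma> \<circ> h) x \<noteq> target p x} \<union> (\<Union>a\<in>U. {x. target p x = a \<and> h x = \<sigma> a}))"
    by (rule measure_pmf.finite_measure_mono) simp
  then have "real (card U) / real p
      \<le> measure_pmf.prob (DX p m) ({x. (inv \<sigma> \<circ> h) x \<noteq> target p x} \<union> (\<Union>a\<in>U. {x. target p x = a \<and> h x = \<sigma> a}))"
    by (simp only: prob_target_in[OF assms(1,2,4)])
  also have "\<dots> \<le> risk p m (inv \<sigma> \<circ> h) + measure_pmf.prob (DX p m) (\<Union>a\<in>U. {x. target p x = a \<and> h x = \<sigma> a})"
    unfolding risk_def by (rule measure_Un_le) auto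
  also have "\<dots> \<le> risk p m (inv \<sigma> \<circ> h) + (\<Sum>a\<in>U. measure_pmf.prob (DX p m) {x. target p x = a \<and> h x = \<sigma> a})"
    using \<open>finite U\<close> by (simp add: measure_pmf.finite_measure_subadditive_finite)
  finally show ?thesis by simp
qed

lemma prob_low_risk_random_perm_le:
  assumes "p > 0" "m \<ge> 1" "U \<subseteq> {..<p}"
  shows "measure_pmf.prob (pmf_of_set {\<sigma>. \<sigma> permutes U}) {\<sigma>. risk p m (inv \<sigma> \<circ> h) \<le> \<epsilon>}
     \<le> (real (card U) + 1) * (real (card U) + 2) / 2 * exp (\<epsilon> * real p - real (card U))"
proof -
  define u where "u = card U"
  define Y where "Y a b = real p * measure_pmf.prob (DX p m) {x. target p x = a \<and> h x = b}" for a b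
  have "finite U" using assms(3) finite_subset by blast
  have Y_rows: "(\<Sum>b\<in>U. Y a b) \<le> 1" if "a \<in> U" for a
    using sum_prob_target_hyp_le[OF assms(1,2) _ \<open>finite U\<close>, of a h] that assms
    by (auto simp: Y_def field_simps simp flip: sum_distrib_left)
  let ?P = "{\<sigma>. \<sigma> permutes U}"
  have "?P \<inter> {\<sigma>. risk p m (inv \<sigma> \<circ> h) \<le> \<epsilon>}
      \<subseteq> {\<sigma>. \<sigma> permutes U \<and> real u - \<epsilon> * real p \<le> (\<Sum>a\<in>U. Y a (\<sigma> a))}"
  proof safe
    fix \<sigma> assume "\<sigma> permutes U" "risk p m (inv \<sigma> \<circ> h) \<le> \<epsilon>"
    then have "real u / real p - (\<Sum>a\<in>U. Y a (\<sigma> a)) / real p \<le> \<epsilon>"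
      using risk_inv_perm_ge[OF assms(1,2) \<open>\<sigma> permutes U\<close> assms(3), of h] assms(1)
      by (simp add: Y_def u_def flip: sum_distrib_left)
    with assms(1) show "real u - \<epsilon> * real p \<le> (\<Sum>a\<in>U. Y a (\<sigma> a))"
      by (simp add: field_simps)
  qed
  then have "card (?P \<inter> {\<sigma>. risk p m (inv \<sigma> \<circ> h) \<le> \<epsilon>})
      \<le> card {\<sigma>. \<sigma> permutes U \<and> real u - \<epsilon> * real p \<le> (\<Sum>a\<in>U. Y a (\<sigma> a))}"
    by (intro card_mono finite_subset[OF _ finite_permutations[OF \<open>finite U\<close>]]) auto
  also have "real \<dots> \<le> fact u * ((real u + 1) * (real u + 2) / 2) * exp (- (real u - \<epsilon> * real p))"
    unfolding u_def by (intro card_permutes_sum_ge_le \<open>finite U\<close> Y_rows) (simp add: Y_def)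
  finally have card_le: "real (card (?P \<inter> {\<sigma>. risk p m (inv \<sigma> \<circ> h) \<le> \<epsilon>}))
      \<le> fact u * ((real u + 1) * (real u + 2) / 2) * exp (- (real u - \<epsilon> * real p))"
    by simp
  have "?P \<noteq> {}" using permutes_id[of U] by blast
  then have "measure_pmf.prob (pmf_of_set ?P) {\<sigma>. risk p m (inv \<sigma> \<circ> h) \<le> \<epsilon>}
      = real (card (?P \<inter> {\<sigma>. risk p m (inv \<sigma> \<circ> h) \<le> \<epsilon>})) / fact u"
    using finite_permutations[OF \<open>finite U\<close>]
    by (simp add: measure_pmf_of_set card_permutations[OF u_def[symmetric] \<open>finite U\<close>])
  also have "\<dots> \<le> fact u * ((real u + 1) * (real u + 2) / 2) * exp (- (real u - \<epsilon> * real p)) / fact u"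
    using card_le by (rule divide_right_mono) simp
  also have "\<dots> = (real (card U) + 1) * (real (card U) + 2) / 2 * exp (\<epsilon> * real p - real (card U))"
    by (simp add: u_def)
  finally show ?thesis .
qed

lemma prob_low_risk_perm_invariant:
  assumes "p > 0" "label_perm_equivariant p m n A" "S \<in> samples p m n"
    and "\<tau> permutes {..<p}" "\<And>y. y \<in> snd ` set S \<Longrightarrow> \<tau> y = y"
  shows "measure_pmf.prob (A S) {h. risk p m (\<tau> \<circ> h) \<le> \<epsilon>} = measure_pmf.prob (A S) {h. risk p m h \<le> \<epsilon>}"
proof -
  let ?E = "{h. risk p m h \<le> \<epsilon>}"
  have "map (\<lambda>(x, y). (x, \<tau> y)) S = S"
    using assms(5) by (intro map_idI) force
  then have equiv: "map_pmf (\<lambda>h. restrict h (Xm p m)) (A S) = map_pmf (\<lambda>h. restrict (\<tau> \<circ> h) (Xm p m)) (A S)"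
    using assms(2-4) unfolding label_perm_equivariant_def by metis
  have "measure_pmf.prob (A S) {h. risk p m (\<tau> \<circ> h) \<le> \<epsilon>}
      = measure_pmf.prob (map_pmf (\<lambda>h. restrict (\<tau> \<circ> h) (Xm p m)) (A S)) ?E"
    by (simp add: vimage_def risk_restrict[OF assms(1)])
  also have "\<dots> = measure_pmf.prob (map_pmf (\<lambda>h. restrict h (Xm p m)) (A S)) ?E"
    by (simp only: equiv)
  also have "\<dots> = measure_pmf.prob (A S) ?E"
    by (simp add: vimage_def risk_restrict[OF assms(1)])
  finally show ?thesis .
qed

lemma prob_low_risk_given_sample:
  assumes "p > 0" "m \<ge> 1" "label_perm_equivariant p m n A" "S \<in> samples p m n"
  defines "u \<equiv> card ({..<p} - snd ` set S)"
  shows "measure_pmf.prob (A S) {h. risk p m h \<le> \<epsilon>} \<le> (real u + 1) * (real u + 2) / 2 * exp (\<epsilon> * real p - real u)"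
proof -
  define U where "U = {..<p} - snd ` set S"
  have "U \<subseteq> {..<p}" "finite U" by (auto simp: U_def)
  have perms: "set_pmf (pmf_of_set {\<sigma>. \<sigma> permutes U}) = {\<sigma>. \<sigma> permutes U}"
    using finite_permutations[OF \<open>finite U\<close>] permutes_id[of U] by (intro set_pmf_of_set) blast+
  show ?thesis
  proof (rule prob_le_of_random_invariance[where R = "pmf_of_set {\<sigma>. \<sigma> permutes U}" and f = "\<lambda>\<sigma> h. inv \<sigma> \<circ> h"])
    fix \<sigma> assume "\<sigma> \<in> set_pmf (pmf_of_set {\<sigma>. \<sigma> permutes U})"
    then have "inv \<sigma> permutes U"
      by (simp add: perms permutes_inv)
    then show "measure_pmf.prob (A S) {h. inv \<sigma> \<circ> h \<in> {h. risk p m h \<le> \<epsilon>}} = measure_pmf.prob (A S) {h. risk p m h \<le> \<epsilon>}"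
      using prob_low_risk_perm_invariant[OF assms(1,3,4) permutes_subset[OF _ \<open>U \<subseteq> {..<p}\<close>]]
        permutes_not_in by (fastforce simp: U_def)
  next
    fix h
    show "measure_pmf.prob (pmf_of_set {\<sigma>. \<sigma> permutes U}) {\<sigma>. inv \<sigma> \<circ> h \<in> {h. risk p m h \<le> \<epsilon>}}
        \<le> (real u + 1) * (real u + 2) / 2 * exp (\<epsilon> * real p - real u)"
      using prob_low_risk_random_perm_le[OF assms(1,2) \<open>U \<subseteq> {..<p}\<close>] by (simp add: U_def u_def)
  qed
qed

lemma prob_low_risk_many_unseen_le:
  assumes "p > 0" "m \<ge> 1" "label_perm_equivariant p m n A" "S \<in> samples p m n"
    and "2 * \<epsilon> * real p \<le> real (card ({..<p} - snd ` set S))"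
  shows "measure_pmf.prob (A S) {h. risk p m h \<le> \<epsilon>} \<le> (real p + 1) * (real p + 2) / 2 * exp (- \<epsilon> * real p)"
proof -
  define u where "u = card ({..<p} - snd ` set S)"
  have "u \<le> p"
    using card_mono[OF finite_lessThan Diff_subset, of p "snd ` set S"] by (simp add: u_def)
  have "measure_pmf.prob (A S) {h. risk p m h \<le> \<epsilon>} \<le> (real u + 1) * (real u + 2) / 2 * exp (\<epsilon> * real p - real u)"
    using prob_low_risk_given_sample[OF assms(1-4)] by (simp add: u_def)
  also have "\<dots> \<le> (real p + 1) * (real p + 2) / 2 * exp (- \<epsilon> * real p)"
    using \<open>u \<le> p\<close> assms(5) by (intro mult_mono divide_right_mono) (auto simp: u_def)
  finally show ?thesis .
qed

lemma prob_low_risk_le: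
  fixes \<epsilon> :: real
  assumes "p \<ge> 2" "m \<ge> 1" "0 < \<epsilon>" "\<epsilon> < 1/2" "10 \<le> \<epsilon> * real p"
    and n: "real n \<le> (real p - 1) * (ln (1/\<epsilon>) - 1)" and "label_perm_equivariant p m n A"
  shows "measure_pmf.prob (output_dist p m n A) {h. risk p m h \<le> \<epsilon>}
     \<le> exp (- \<epsilon> * real p / 400) + (real p + 1) * (real p + 2) / 2 * exp (- \<epsilon> * real p)"
proof -
  define s where "s = nat \<lfloor>2 * \<epsilon> * real p\<rfloor>"
  have s: "real s \<le> 2 * \<epsilon> * real p" "2 * \<epsilon> * real p < real s + 1"
    using assms(3) by (simp_all add: s_def)
  have "2 * \<epsilon> * real p \<le> real p"
    using mult_left_le_one_le[of "real p" "2 * \<epsilon>"] assms(3,4) by simp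
  with s(1) have "s \<le> p" by simp
  have "0 \<le> (real p - 1) * (ln (1/\<epsilon>) - 1)"
    using n by (meson of_nat_0_le_iff order_trans)
  then have "ln (1/\<epsilon>) \<ge> 1"
    using assms(1) by (simp add: zero_le_mult_iff)
  then have n': "real n \<le> real p * (ln (1/\<epsilon>) - 1)"
    using n mult_right_mono[of "real p - 1" "real p" "ln (1/\<epsilon>) - 1"] by linarith
  define K where "K = (real p + 1) * (real p + 2) / 2 * exp (- \<epsilon> * real p)"
  have "measure_pmf.prob (output_dist p m n A) {h. risk p m h \<le> \<epsilon>}
      \<le> measure_pmf.prob (sample_dist p m n) {S. card ({..<p} - snd ` set S) \<le> s} + K"
    unfolding output_dist_def
  proof (rule prob_bind_pmf_le)
    fix S assume S: "S \<in> set_pmf (sample_dist p m n)" "S \<notin> {S. card ({..<p} - snd ` set S) \<le> s}"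
    have "p > 0" using assms(1) by simp
    have "S \<in> samples p m n"
      using set_pmf_sample_dist[OF \<open>p > 0\<close>] S(1) by blast
    moreover have "2 * \<epsilon> * real p \<le> real (card ({..<p} - snd ` set S))"
      using S(2) s(2) by simp
    ultimately show "measure_pmf.prob (A S) {h. risk p m h \<le> \<epsilon>} \<le> K"
      unfolding K_def by (rule prob_low_risk_many_unseen_le[OF \<open>p > 0\<close> assms(2,7)])
  qed (simp add: K_def)
  also have "\<dots> \<le> (1 + \<epsilon>/20) ^ n / coverage_potential (\<epsilon>/20) p (p - s) + K"
    using prob_few_unseen_labels_le[of p m "\<epsilon>/20" s n] assms(1-3) \<open>s \<le> p\<close> by simp
  also have "\<dots> \<le> exp (- \<epsilon> * real p / 400) + K"
    using coverage_bound_le_exp[OF assms(3) n' _ \<open>s \<le> p\<close>] s assms(5) by simp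
  finally show ?thesis by (simp add: K_def)
qed

definition error_bound :: "real \<Rightarrow> real \<Rightarrow> real \<Rightarrow> nat \<Rightarrow> real" where
  "error_bound c1 c2 \<epsilon> p = exp (- ((exp 1 - 1)^2 / (2 * ln (1/\<epsilon>))) * \<epsilon>^2 * real p)
    + exp (- c1 * \<epsilon> * real p) + exp (- c2 * \<epsilon>^2 * real p / ln (1/\<epsilon>))"

lemma eventually_prob_low_risk_le:
  fixes \<epsilon> :: real
  assumes "0 < \<epsilon>" "\<epsilon> < 1/2"
  shows "\<forall>\<^sub>F p in sequentially. \<forall>m n A. m \<ge> 1 \<longrightarrow> real n \<le> (real p - 1) * (ln (1/\<epsilon>) - 1) \<longrightarrow>
    label_perm_equivariant p m n A \<longrightarrow>
    measure_pmf.prob (output_dist p m n A) {h. risk p m h \<le> \<epsilon>}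
      \<le> error_bound (1/800) (1/400) \<epsilon> p"
proof -
  have "\<epsilon>^2 / ln (1/\<epsilon>) \<le> \<epsilon>"
  proof -
    have "1 - \<epsilon> \<le> ln (1/\<epsilon>)" using ln_le_minus_one[OF assms(1)] assms(1) by (simp add: ln_div)
    then show ?thesis using assms by (simp add: power2_eq_square field_simps mult_left_mono)
  qed
  then have exp_le: "exp (- \<epsilon> * real p / 400) \<le> exp (- (1/400) * \<epsilon>^2 * real p / ln (1/\<epsilon>))" for p :: nat
    using mult_right_mono[of "\<epsilon>^2 / ln (1/\<epsilon>)" \<epsilon> "real p"] by simp
  have "\<forall>\<^sub>F p in sequentially. 2 \<le> p" "\<forall>\<^sub>F p in sequentially. 10 \<le> \<epsilon> * real p"
    "\<forall>\<^sub>F p in sequentially. (real p + 1) * (real p + 2) / 2 * exp (- \<epsilon> * real p) \<le> exp (- (1/800) * \<epsilon> * real p)"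
    using assms(1) by real_asymp+
  then show ?thesis
  proof eventually_elim
    case (elim p)
    have "measure_pmf.prob (output_dist p m n A) {h. risk p m h \<le> \<epsilon>}
        \<le> exp (- (1/800) * \<epsilon> * real p) + exp (- (1/400) * \<epsilon>^2 * real p / ln (1/\<epsilon>))"
      if "m \<ge> 1" "real n \<le> (real p - 1) * (ln (1/\<epsilon>) - 1)" "label_perm_equivariant p m n A" for m n A
      using prob_low_risk_le[of p m \<epsilon> n A] elim that assms exp_le[of p] by linarith
    then show ?case
      unfolding error_bound_def by (smt (verit) exp_ge_zero)
  qed
qed

lemma eventually_error_bound_le:
  fixes \<epsilon> \<delta> :: real
  assumes "0 < \<epsilon>" "\<epsilon> < 1/2" "0 < \<delta>"
  shows "\<forall>\<^sub>F p in sequentially. error_bound (1/800) (1/400) \<epsilon> p \<le> \<delta>"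
proof -
  have "ln (1/\<epsilon>) > 0" using assms by simp
  have lim: "(\<lambda>p. exp (- a * real p)) \<longlonglongrightarrow> 0" if "a > 0" for a :: real
    using that by real_asymp
  have "(\<lambda>p. exp (- ((exp 1 - 1)^2 / (2 * ln (1/\<epsilon>)) * \<epsilon>^2) * real p)
      + exp (- (1/800 * \<epsilon>) * real p) + exp (- (1/400 * \<epsilon>^2 / ln (1/\<epsilon>)) * real p)) \<longlonglongrightarrow> 0 + 0 + 0"
    using assms \<open>ln (1/\<epsilon>) > 0\<close> by (intro tendsto_add lim) (simp_all add: exp_gt_one)
  then have "\<forall>\<^sub>F p in sequentially. exp (- ((exp 1 - 1)^2 / (2 * ln (1/\<epsilon>)) * \<epsilon>^2) * real p)
      + exp (- (1/800 * \<epsilon>) * real p) + exp (- (1/400 * \<epsilon>^2 / ln (1/\<epsilon>)) * real p) < \<delta>"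
    using assms(3) by (intro order_tendstoD(2)) auto
  then show ?thesis
    by eventually_elim (simp add: error_bound_def algebra_simps)
qed

theorem mainTheorem8:
  "\<exists>c1 c2 :: real. c1 > 0 \<and> c2 > 0 \<and>
    (\<forall>\<epsilon> \<delta> :: real. 0 < \<epsilon> \<and> \<epsilon> < 1/2 \<and> 0 < \<delta> \<and> \<delta> < 1/2 \<longrightarrow>
      (\<exists>p0 :: nat. \<forall>p \<ge> p0. \<forall>m :: nat. m \<ge> 1 \<longrightarrow>
        (let B = exp (- ((exp 1 - 1)^2 / (2 * ln (1/\<epsilon>))) * \<epsilon>^2 * real p)
                 + exp (- c1 * \<epsilon> * real p)
                 + exp (- c2 * \<epsilon>^2 * real p / ln (1/\<epsilon>))
         in B \<le> \<delta> \<and>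
            (\<forall>n :: nat. \<forall>A :: learner.
               real n \<le> (real p - 1) * (ln (1/\<epsilon>) - 1) \<longrightarrow>
               valid_learner p m n A \<longrightarrow> label_perm_equivariant p m n A \<longrightarrow>
               measure_pmf.prob (output_dist p m n A) {h. risk p m h \<le> \<epsilon>} \<le> B))))"
  apply (rule exI[of _ "1/800"], rule exI[of _ "1/400"], intro conjI allI impI)
    subgoal by simp
   subgoal by simp
  subgoal for \<epsilon> \<delta>
    using eventually_conj[OF eventually_error_bound_le[of \<epsilon> \<delta>] eventually_prob_low_risk_le[of \<epsilon>]]
    unfolding eventually_sequentially Let_def error_bound_def[symmetric] by auto
  done

end
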